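(* For every $g\ge 3$, there exist graphs of girth $g$ that do not belong to CBU.
   Context: Let $e_1,\ldots,e_d$ be the standard basis of $\mathbb{R}^d$. For $d\ge 1$, a graph belongs to $d$-CBU if one can assign to each vertex an axis-parallel box (product of $d$ closed intervals of positive length) in $\mathbb{R}^d$ such that the boxes have pairwise disjoint interiors, two distinct vertices are adjacent iff their boxes intersect, and any two intersecting boxes intersect in a $(d-1)$-dimensional box orthogonal to $e_1$. CBU is the union of $d$-CBU over all $d\ge 1$. *)

theory Defs
  imports Complex_Main
begin

definition simple_graph :: "'a set \<Rightarrow> ('a \<Rightarrow> 'a \<Rightarrow> bool) \<Rightarrow> bool" where
  "simple_graph V E \<longleftrightarrow> finite V \<and> (\<forall>u v. E u v \<longrightarrow> u \<in> V \<and> v \<in> V) \<and>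
     (\<forall>u v. E u v \<longrightarrow> E v u) \<and> (\<forall>v. \<not> E v v)"

definition has_cycle_of_length :: "'a set \<Rightarrow> ('a \<Rightarrow> 'a \<Rightarrow> bool) \<Rightarrow> nat \<Rightarrow> bool" where
  "has_cycle_of_length V E k \<longleftrightarrow> k \<ge> 3 \<and> (\<exists>vs. length vs = k \<and> distinct vs \<and> set vs \<subseteq> V \<and>
     (\<forall>i<k. E (vs ! i) (vs ! ((i + 1) mod k))))"

definition has_girth :: "'a set \<Rightarrow> ('a \<Rightarrow> 'a \<Rightarrow> bool) \<Rightarrow> nat \<Rightarrow> bool" where
  "has_girth V E g \<longleftrightarrow> has_cycle_of_length V E g \<and> (\<forall>k<g. \<not> has_cycle_of_length V E k)"

(* Box of vertex v in R^d: product over coordinates i < d of [lo v i, hi v i], lo v i < hi v i.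
   Coordinate 0 corresponds to e_1. *)
definition CBU_rep :: "nat \<Rightarrow> 'a set \<Rightarrow> ('a \<Rightarrow> 'a \<Rightarrow> bool) \<Rightarrow>
     ('a \<Rightarrow> nat \<Rightarrow> real) \<Rightarrow> ('a \<Rightarrow> nat \<Rightarrow> real) \<Rightarrow> bool" where
  "CBU_rep d V E lo hi \<longleftrightarrow>
     (\<forall>v\<in>V. \<forall>i<d. lo v i < hi v i) \<and>
     (\<forall>u\<in>V. \<forall>v\<in>V. u \<noteq> v \<longrightarrow>
        \<comment> \<open>pairwise disjoint interiors\<close>
        (\<exists>i<d. hi u i \<le> lo v i \<or> hi v i \<le> lo u i) \<and>
        \<comment> \<open>adjacent iff boxes intersect\<close>
        (E u v \<longleftrightarrow> (\<forall>i<d. lo u i \<le> hi v i \<and> lo v i \<le> hi u i)) \<and>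
        \<comment> \<open>intersecting boxes meet in a (d-1)-dimensional box orthogonal to e_1\<close>
        ((\<forall>i<d. lo u i \<le> hi v i \<and> lo v i \<le> hi u i) \<longrightarrow>
           max (lo u 0) (lo v 0) = min (hi u 0) (hi v 0) \<and>
           (\<forall>i. 0 < i \<and> i < d \<longrightarrow> max (lo u i) (lo v i) < min (hi u i) (hi v i))))"

definition d_CBU :: "nat \<Rightarrow> 'a set \<Rightarrow> ('a \<Rightarrow> 'a \<Rightarrow> bool) \<Rightarrow> bool" where
  "d_CBU d V E \<longleftrightarrow> (\<exists>lo hi. CBU_rep d V E lo hi)"

definition CBU :: "'a set \<Rightarrow> ('a \<Rightarrow> 'a \<Rightarrow> bool) \<Rightarrow> bool" where
  "CBU V E \<longleftrightarrow> (\<exists>d\<ge>1. d_CBU d V E)"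

end

theory Submission
  imports Defs
begin

(* In a CBU representation two adjacent boxes meet in a hyperplane orthogonal to e_1, so the
   right end of one box in the first coordinate is the left end of the other. Hence for every set
   A of reals the vertices whose box starts in A and ends outside A are pairwise non-adjacent; for
   a uniformly random A each vertex is kept with probability 1/4, so every CBU graph, and every
   induced subgraph of one, has an independent set containing a quarter of its vertices.

   Erdos' deletion argument gives graphs without cycles shorter than g whose independent sets are
   all smaller: in the random graph on n = 256 M vertices with edge probability 1/M, M = 256^g,
   the expected number of short cycles is at most M, and an independent set of n/8 vertices
   exists with probability at most 1/2. Deleting one vertex from each short cycle of a graph
   avoiding both events leaves more than n/2 vertices. Adding a disjoint cycle of length g makes
   the girth exactly g and keeps the graph of the deletion argument as an induced subgraph. *)

section \<open>Random subsets\<close>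

(* E ranges over the subsets of the finite set P, each element of P being put into E
   independently with probability p. *)
definition bern_weight :: "real \<Rightarrow> 'a set \<Rightarrow> 'a set \<Rightarrow> real" where
  "bern_weight p P E = (\<Prod>e\<in>P. if e \<in> E then p else 1 - p)"

definition bern_expect :: "real \<Rightarrow> 'a set \<Rightarrow> ('a set \<Rightarrow> real) \<Rightarrow> real" where
  "bern_expect p P X = (\<Sum>E\<in>Pow P. bern_weight p P E * X E)"

definition bern_prob :: "real \<Rightarrow> 'a set \<Rightarrow> ('a set \<Rightarrow> bool) \<Rightarrow> real" where
  "bern_prob p P Q = bern_expect p P (\<lambda>E. of_bool (Q E))"

lemma sum_Pow_prod_if:
  fixes a b :: "'a \<Rightarrow> 'b::comm_semiring_1"
  assumes "finite P"
  shows "(\<Sum>E\<in>Pow P. \<Prod>e\<in>P. if e \<in> E then a e else b e) = (\<Prod>e\<in>P. a e + b e)"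
proof -
  have "(\<Prod>e\<in>P. if e \<in> E then a e else b e) = (\<Prod>e\<in>E. a e) * (\<Prod>e\<in>P - E. b e)"
    if "E \<in> Pow P" for E
    using that assms by (simp add: prod.If_cases Int_absorb1 Diff_eq)
  then show ?thesis
    by (simp add: prod_add[OF assms])
qed

lemma bern_weight_nonneg: "0 \<le> p \<Longrightarrow> p \<le> 1 \<Longrightarrow> 0 \<le> bern_weight p P E"
  unfolding bern_weight_def by (rule prod_nonneg) auto

lemma bern_expect_const: "finite P \<Longrightarrow> bern_expect p P (\<lambda>_. c) = c"
  unfolding bern_expect_def bern_weight_def
  by (simp add: sum_distrib_right[symmetric] sum_Pow_prod_if)

lemma bern_expect_add:
  "bern_expect p P (\<lambda>E. X E + Y E) = bern_expect p P X + bern_expect p P Y"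
  unfolding bern_expect_def by (simp add: distrib_left sum.distrib)

lemma bern_expect_sum:
  "bern_expect p P (\<lambda>E. \<Sum>x\<in>A. X x E) = (\<Sum>x\<in>A. bern_expect p P (X x))"
  unfolding bern_expect_def by (simp add: sum_distrib_left sum.swap[of _ A])

lemma bern_expect_mono:
  assumes "0 \<le> p" "p \<le> 1" "\<And>E. E \<subseteq> P \<Longrightarrow> X E \<le> Y E"
  shows "bern_expect p P X \<le> bern_expect p P Y"
  unfolding bern_expect_def
  using assms by (intro sum_mono mult_left_mono) (auto intro: bern_weight_nonneg)

lemma bern_prob_restrict_eq:
  assumes "finite P" "A \<subseteq> S" "S \<subseteq> P"
  shows "bern_prob p P (\<lambda>E. E \<inter> S = A) = p ^ card A * (1 - p) ^ card (S - A)"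
proof -
  define a where "a e = (if e \<in> S - A then 0 else p)" for e
  define b where "b e = (if e \<in> A then 0 else 1 - p)" for e
  have "bern_weight p P E * of_bool (E \<inter> S = A) = (\<Prod>e\<in>P. if e \<in> E then a e else b e)"
    if "E \<subseteq> P" for E
  proof (cases "E \<inter> S = A")
    case True
    then show ?thesis
      unfolding bern_weight_def a_def b_def by (auto intro!: prod.cong)
  next
    case False
    then obtain e where "e \<in> P" "(e \<in> E \<and> e \<in> S - A) \<or> (e \<notin> E \<and> e \<in> A)"
      using that assms by blast
    then show ?thesis
      using False assms(1) by (subst prod_zero) (auto simp: a_def b_def intro!: bexI[of _ e])
  qed
  then have "bern_prob p P (\<lambda>E. E \<inter> S = A) = (\<Prod>e\<in>P. a e + b e)"
    unfolding bern_prob_def bern_expect_def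
    by (simp add: sum_Pow_prod_if[OF assms(1), symmetric] del: sum_mult_of_bool_eq)
  also have "\<dots> = (\<Prod>e\<in>A. p) * (\<Prod>e\<in>S - A. 1 - p)"
  proof -
    have "(\<Prod>e\<in>P. a e + b e) = (\<Prod>e\<in>P. if e \<in> A then p else if e \<in> S - A then 1 - p else 1)"
      by (rule prod.cong) (auto simp: a_def b_def)
    moreover have "P \<inter> A = A" "P \<inter> - A \<inter> S = S - A" using assms by auto
    ultimately show ?thesis
      using assms by (simp add: prod.If_cases Int_assoc)
  qed
  finally show ?thesis by simp
qed

lemma bern_prob_superset:
  "finite P \<Longrightarrow> S \<subseteq> P \<Longrightarrow> bern_prob p P (\<lambda>E. S \<subseteq> E) = p ^ card S"
  using bern_prob_restrict_eq[of P S S p] by (simp add: Int_absorb1 Int_commute inf.absorb_iff2)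

lemma bern_prob_disjoint:
  "finite P \<Longrightarrow> S \<subseteq> P \<Longrightarrow> bern_prob p P (\<lambda>E. S \<inter> E = {}) = (1 - p) ^ card S"
  using bern_prob_restrict_eq[of P "{}" S p] by (simp add: Int_commute)

lemma bern_prob_Markov:
  assumes "0 \<le> p" "p \<le> 1" "0 < a" "\<And>E. E \<subseteq> P \<Longrightarrow> 0 \<le> X E"
  shows "bern_prob p P (\<lambda>E. a \<le> X E) \<le> bern_expect p P X / a"
proof -
  have "bern_prob p P (\<lambda>E. a \<le> X E) \<le> bern_expect p P (\<lambda>E. X E / a)"
    unfolding bern_prob_def using assms by (intro bern_expect_mono) auto
  also have "\<dots> = bern_expect p P X / a"
    unfolding bern_expect_def by (simp add: sum_divide_distrib)
  finally show ?thesis .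
qed

lemma bern_prob_disj:
  assumes "0 \<le> p" "p \<le> 1"
  shows "bern_prob p P (\<lambda>E. Q E \<or> R E) \<le> bern_prob p P Q + bern_prob p P R"
  unfolding bern_prob_def bern_expect_add[symmetric]
  using assms by (intro bern_expect_mono) auto

lemma bern_prob_Bex:
  assumes "0 \<le> p" "p \<le> 1" "finite A"
  shows "bern_prob p P (\<lambda>E. \<exists>x\<in>A. Q x E) \<le> (\<Sum>x\<in>A. bern_prob p P (Q x))"
proof -
  have "of_bool (\<exists>x\<in>A. Q x E) \<le> (\<Sum>x\<in>A. of_bool (Q x E) :: real)" for E
  proof (cases "\<exists>x\<in>A. Q x E")
    case True
    then obtain x where "x \<in> A" "Q x E" by blast
    then show ?thesis
      using member_le_sum[of x A "\<lambda>x. of_bool (Q x E) :: real"] assms(3) by simp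
  qed (simp add: sum_nonneg)
  then show ?thesis
    unfolding bern_prob_def bern_expect_sum[symmetric]
    using assms by (intro bern_expect_mono) auto
qed

lemma bern_expect_obtain_ge:
  assumes "finite P" "0 \<le> p" "p \<le> 1" "c \<le> bern_expect p P X"
  obtains E where "E \<subseteq> P" "c \<le> X E"
proof -
  let ?m = "Max (X ` Pow P)"
  have fin: "finite (X ` Pow P)" "X ` Pow P \<noteq> {}" using assms(1) by auto
  obtain E where "E \<subseteq> P" "X E = ?m"
    using Max_in[OF fin] by auto
  moreover have "bern_expect p P X \<le> bern_expect p P (\<lambda>_. ?m)"
    using assms(2,3) fin by (intro bern_expect_mono) auto
  ultimately show ?thesis
    using that assms(4) bern_expect_const[OF assms(1)] by auto
qed

lemma bern_prob_less_one_obtain: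
  assumes "finite P" "0 \<le> p" "p \<le> 1" "bern_prob p P Q < 1"
  obtains E where "E \<subseteq> P" "\<not> Q E"
proof -
  have "(\<lambda>E. of_bool (\<not> Q E) + of_bool (Q E)) = (\<lambda>_. 1 :: real)"
    by auto
  then have "bern_expect p P (\<lambda>E. of_bool (\<not> Q E)) = 1 - bern_prob p P Q"
    using bern_expect_add[of p P "\<lambda>E. of_bool (\<not> Q E)" "\<lambda>E. of_bool (Q E)"]
    unfolding bern_prob_def by (simp add: bern_expect_const[OF assms(1)])
  then obtain E where "E \<subseteq> P" "1 - bern_prob p P Q \<le> of_bool (\<not> Q E)"
    using bern_expect_obtain_ge[OF assms(1-3)] by (metis order_refl)
  with assms(4) that show ?thesis by (cases "Q E") auto
qed

section \<open>Independent sets of CBU graphs\<close>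

definition independent_set :: "('a \<Rightarrow> 'a \<Rightarrow> bool) \<Rightarrow> 'a set \<Rightarrow> bool" where
  "independent_set E I \<longleftrightarrow> (\<forall>u\<in>I. \<forall>v\<in>I. u \<noteq> v \<longrightarrow> \<not> E u v)"

lemma CBU_rep_induced_subgraph:
  assumes rep: "CBU_rep d V E lo hi" and "W \<subseteq> V"
    and F: "\<And>u v. u \<in> W \<Longrightarrow> v \<in> W \<Longrightarrow> F u v \<longleftrightarrow> E u v"
  shows "CBU_rep d W F lo hi"
proof -
  have "CBU_rep d W E lo hi"
    using rep \<open>W \<subseteq> V\<close> unfolding CBU_rep_def by blast
  then show ?thesis
    unfolding CBU_rep_def using F by simp
qed

lemma CBU_induced_subgraph:
  assumes "CBU V E" "W \<subseteq> V" "\<And>u v. u \<in> W \<Longrightarrow> v \<in> W \<Longrightarrow> F u v \<longleftrightarrow> E u v"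
  shows "CBU W F"
proof -
  obtain d lo hi where "1 \<le> d" and rep: "CBU_rep d V E lo hi"
    using assms(1) unfolding CBU_def d_CBU_def by blast
  have "CBU_rep d W F lo hi"
    using CBU_rep_induced_subgraph[OF rep assms(2)] assms(3) by blast
  with \<open>1 \<le> d\<close> show ?thesis
    unfolding CBU_def d_CBU_def by blast
qed

lemma CBU_rep_adjacent_touch:
  assumes rep: "CBU_rep d V E lo hi" and "1 \<le> d" "u \<in> V" "v \<in> V" "u \<noteq> v" "E u v"
  shows "hi u 0 = lo v 0 \<or> hi v 0 = lo u 0"
proof -
  have "lo u 0 < hi u 0" "lo v 0 < hi v 0"
    using rep assms(2-4) unfolding CBU_rep_def by auto
  moreover have "max (lo u 0) (lo v 0) = min (hi u 0) (hi v 0)"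
    using rep assms(2-6) unfolding CBU_rep_def by blast
  ultimately show ?thesis
    by (auto simp: max_def min_def split: if_splits)
qed

lemma CBU_large_independent_set:
  assumes "CBU V E" "finite V"
  obtains I where "I \<subseteq> V" "independent_set E I" "card V \<le> 4 * card I"
proof -
  obtain d lo hi where "1 \<le> d" and rep: "CBU_rep d V E lo hi"
    using assms(1) unfolding CBU_def d_CBU_def by blast
  define T where "T = (\<lambda>v. lo v 0) ` V \<union> (\<lambda>v. hi v 0) ` V"
  define I where "I A = {v \<in> V. lo v 0 \<in> A \<and> hi v 0 \<notin> A}" for A
  have "finite T" using assms(2) by (simp add: T_def)
  have indep: "independent_set E (I A)" for A
  proof -
    have "\<not> E u v" if "u \<in> I A" "v \<in> I A" "u \<noteq> v" for u v
    proof
      assume "E u v"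
      with that have "hi u 0 = lo v 0 \<or> hi v 0 = lo u 0"
        by (intro CBU_rep_adjacent_touch[OF rep \<open>1 \<le> d\<close>]) (auto simp: I_def)
      with that show False
        by (auto simp: I_def)
    qed
    then show ?thesis
      unfolding independent_set_def by blast
  qed
  have prob: "bern_prob (1 / 2) T (\<lambda>A. lo v 0 \<in> A \<and> hi v 0 \<notin> A) = 1 / 4" if "v \<in> V" for v
  proof -
    have ne: "lo v 0 \<noteq> hi v 0"
      using rep that \<open>1 \<le> d\<close> unfolding CBU_rep_def by force
    have "bern_prob (1 / 2) T (\<lambda>A. A \<inter> {lo v 0, hi v 0} = {lo v 0}) = 1 / 4"
      using that ne bern_prob_restrict_eq[OF \<open>finite T\<close>, of "{lo v 0}" "{lo v 0, hi v 0}" "1 / 2"]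
      by (simp add: T_def insert_Diff_if)
    moreover have "(A \<inter> {lo v 0, hi v 0} = {lo v 0}) \<longleftrightarrow> lo v 0 \<in> A \<and> hi v 0 \<notin> A" for A
      using ne by (auto simp: Int_insert_right)
    ultimately show ?thesis
      by simp
  qed
  have "real (card (I A)) = (\<Sum>v\<in>V. of_bool (lo v 0 \<in> A \<and> hi v 0 \<notin> A))" for A
    using assms(2) by (simp add: I_def Int_def)
  then have "bern_expect (1 / 2) T (\<lambda>A. real (card (I A)))
      = (\<Sum>v\<in>V. bern_prob (1 / 2) T (\<lambda>A. lo v 0 \<in> A \<and> hi v 0 \<notin> A))"
    by (simp add: bern_expect_sum bern_prob_def)
  also have "\<dots> = (\<Sum>v\<in>V. 1 / 4)"
    using prob by (rule sum.cong[OF refl])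
  also have "\<dots> = real (card V) / 4"
    by simp
  finally have "real (card V) / 4 \<le> bern_expect (1 / 2) T (\<lambda>A. real (card (I A)))"
    by simp
  then obtain A where "real (card V) / 4 \<le> real (card (I A))"
    by (rule bern_expect_obtain_ge[OF \<open>finite T\<close>, rotated 2]) auto
  then show ?thesis
    using that[of "I A"] indep by (auto simp: I_def)
qed

section \<open>Random graphs with few short cycles\<close>

definition pairs :: "'a set \<Rightarrow> 'a set set" where
  "pairs A = {e. e \<subseteq> A \<and> card e = 2}"

definition cycle_edges :: "'a list \<Rightarrow> 'a set set" where
  "cycle_edges vs = (\<lambda>i. {vs ! i, vs ! ((i + 1) mod length vs)}) ` {..<length vs}"

definition short_cycles :: "nat \<Rightarrow> nat \<Rightarrow> nat list set" where
  "short_cycles n g = {vs. set vs \<subseteq> {..<n} \<and> distinct vs \<and> 3 \<le> length vs \<and> length vs < g}"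

lemma Suc_mod_neq:
  fixes i k :: nat
  assumes "2 \<le> k" "i < k"
  shows "(i + 1) mod k \<noteq> i"
proof (cases "i + 1 = k")
  case True
  then show ?thesis using assms by (simp add: True[symmetric])
qed (use assms in simp)

lemma Suc_Suc_mod_neq:
  fixes i k :: nat
  assumes "3 \<le> k" "i < k"
  shows "(i + 2) mod k \<noteq> i"
proof -
  consider "i + 2 < k" | "k = i + 2" | "k = i + 1" using assms(2) by linarith
  then show ?thesis
  proof cases
    case 3
    then have "(i + 2) mod k = 1" using assms(1) mod_add_self2[of 1 k] by simp
    then show ?thesis using 3 assms(1) by simp
  qed (use assms(1) in auto)
qed

lemma finite_pairs: "finite A \<Longrightarrow> finite (pairs A)"
  unfolding pairs_def by (rule finite_subset[of _ "Pow A"]) auto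

lemma card_pairs: "finite A \<Longrightarrow> card (pairs A) = card A choose 2"
  unfolding pairs_def by (rule n_subsets)

lemma cycle_edges_subset_pairs:
  assumes "distinct vs" "2 \<le> length vs" "set vs \<subseteq> A"
  shows "cycle_edges vs \<subseteq> pairs A"
proof
  fix e assume "e \<in> cycle_edges vs"
  then obtain i where i: "i < length vs" "e = {vs ! i, vs ! ((i + 1) mod length vs)}"
    unfolding cycle_edges_def by auto
  have "0 < length vs" using i(1) by linarith
  then have "(i + 1) mod length vs < length vs" by simp
  moreover have "vs ! i \<noteq> vs ! ((i + 1) mod length vs)"
    using assms(1,2) i(1) calculation Suc_mod_neq[OF assms(2) i(1)] by (simp add: nth_eq_iff_index_eq)
  ultimately show "e \<in> pairs A"
    using i assms(3) nth_mem unfolding pairs_def by fastforce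
qed

lemma card_cycle_edges:
  assumes "distinct vs" "3 \<le> length vs"
  shows "card (cycle_edges vs) = length vs"
proof -
  let ?k = "length vs"
  have "i = j" if ij: "i < ?k" "j < ?k" "{vs ! i, vs ! ((i + 1) mod ?k)} = {vs ! j, vs ! ((j + 1) mod ?k)}" for i j
  proof (rule ccontr)
    assume "i \<noteq> j"
    then have "vs ! i = vs ! ((j + 1) mod ?k)" "vs ! ((i + 1) mod ?k) = vs ! j"
      using ij(3) assms(1) ij(1,2) by (auto simp: doubleton_eq_iff nth_eq_iff_index_eq)
    moreover have "(i + 1) mod ?k < ?k" "(j + 1) mod ?k < ?k"
      using ij(1) by (metis mod_less_divisor gr_zeroI not_less_zero)+
    ultimately have "i = (j + 1) mod ?k" "(i + 1) mod ?k = j"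
      using assms(1) ij(1,2) by (simp_all add: nth_eq_iff_index_eq)
    then have "(i + 2) mod ?k = i"
      by (metis mod_add_left_eq add.assoc one_add_one)
    then show False using Suc_Suc_mod_neq assms(2) ij(1) by blast
  qed
  then have "inj_on (\<lambda>i. {vs ! i, vs ! ((i + 1) mod ?k)}) {..<?k}"
    by (intro inj_onI) auto
  then show ?thesis unfolding cycle_edges_def by (simp add: card_image)
qed

lemma finite_short_cycles: "finite (short_cycles n g)"
proof -
  have "short_cycles n g \<subseteq> {vs. set vs \<subseteq> {..<n} \<and> length vs \<le> g}"
    by (auto simp: short_cycles_def)
  then show ?thesis using finite_lists_length_le[of "{..<n}" g] finite_subset by auto
qed

lemma bern_expect_card_short_cycles:
  "bern_expect p (pairs {..<n}) (\<lambda>E. card {vs \<in> short_cycles n g. cycle_edges vs \<subseteq> E})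
     = (\<Sum>vs\<in>short_cycles n g. p ^ length vs)"
proof -
  have "real (card {vs \<in> short_cycles n g. cycle_edges vs \<subseteq> E})
          = (\<Sum>vs\<in>short_cycles n g. of_bool (cycle_edges vs \<subseteq> E))" for E
    by (simp add: finite_short_cycles Int_def)
  then have "bern_expect p (pairs {..<n}) (\<lambda>E. card {vs \<in> short_cycles n g. cycle_edges vs \<subseteq> E})
      = (\<Sum>vs\<in>short_cycles n g. bern_prob p (pairs {..<n}) (\<lambda>E. cycle_edges vs \<subseteq> E))"
    unfolding bern_prob_def by (simp add: bern_expect_sum[symmetric])
  also have "\<dots> = (\<Sum>vs\<in>short_cycles n g. p ^ length vs)"
  proof (intro sum.cong refl)
    fix vs assume "vs \<in> short_cycles n g"
    then have "distinct vs" "3 \<le> length vs" "set vs \<subseteq> {..<n}"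
      by (auto simp: short_cycles_def)
    moreover from this have "cycle_edges vs \<subseteq> pairs {..<n}"
      by (intro cycle_edges_subset_pairs) auto
    ultimately
    show "bern_prob p (pairs {..<n}) (\<lambda>E. cycle_edges vs \<subseteq> E) = p ^ length vs"
      by (simp add: bern_prob_superset finite_pairs card_cycle_edges)
  qed
  finally show ?thesis .
qed

lemma sum_short_cycles_le:
  assumes "0 \<le> p"
  shows "(\<Sum>vs\<in>short_cycles n g. p ^ length vs) \<le> (\<Sum>k<g. (real n * p) ^ k)"
proof -
  define L where "L k = {vs. set vs \<subseteq> {..<n} \<and> length vs = k}" for k
  have "(\<Sum>vs\<in>short_cycles n g. p ^ length vs) \<le> (\<Sum>vs\<in>(\<Union>k<g. L k). p ^ length vs)"
    using assms by (intro sum_mono2) (auto simp: L_def short_cycles_def finite_lists_length_eq)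
  also have "\<dots> = (\<Sum>k<g. \<Sum>vs\<in>L k. p ^ length vs)"
    by (rule sum.UNION_disjoint) (auto simp: L_def finite_lists_length_eq)
  also have "\<dots> = (\<Sum>k<g. (real n * p) ^ k)"
  proof (intro sum.cong refl)
    fix k
    have "(\<Sum>vs\<in>L k. p ^ length vs) = (\<Sum>vs\<in>L k. p ^ k)"
      by (intro sum.cong) (auto simp: L_def)
    then show "(\<Sum>vs\<in>L k. p ^ length vs) = (real n * p) ^ k"
      by (simp add: L_def card_lists_length_eq power_mult_distrib)
  qed
  finally show ?thesis .
qed

lemma bern_prob_independent_set:
  fixes p :: real
  assumes "0 \<le> p" "p \<le> 1"
  shows "bern_prob p (pairs {..<n}) (\<lambda>E. \<exists>T\<in>{T. T \<subseteq> {..<n} \<and> card T = t}. pairs T \<inter> E = {})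
           \<le> (n choose t) * (1 - p) ^ (t choose 2)"
proof -
  let ?Ts = "{T. T \<subseteq> {..<n} \<and> card T = t}"
  have "finite ?Ts" by (rule finite_subset[of _ "Pow {..<n}"]) auto
  have "bern_prob p (pairs {..<n}) (\<lambda>E. \<exists>T\<in>?Ts. pairs T \<inter> E = {})
      \<le> (\<Sum>T\<in>?Ts. bern_prob p (pairs {..<n}) (\<lambda>E. pairs T \<inter> E = {}))"
    by (rule bern_prob_Bex[OF assms \<open>finite ?Ts\<close>])
  also have "\<dots> = (\<Sum>T\<in>?Ts. (1 - p) ^ (t choose 2))"
  proof (intro sum.cong refl)
    fix T assume T: "T \<in> ?Ts"
    then have "pairs T \<subseteq> pairs {..<n}" "finite T" by (auto simp: pairs_def finite_subset)
    then show "bern_prob p (pairs {..<n}) (\<lambda>E. pairs T \<inter> E = {}) = (1 - p) ^ (t choose 2)"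
      using T by (simp add: bern_prob_disjoint finite_pairs card_pairs)
  qed
  also have "\<dots> = (n choose t) * (1 - p) ^ (t choose 2)"
    by (simp add: n_subsets)
  finally show ?thesis .
qed

lemma exists_edge_set_few_short_cycles_no_independent_set:
  fixes p :: real and n g t :: nat
  assumes "0 \<le> p" "p \<le> 1" "0 < n"
    and "2 / real n * (\<Sum>k<g. (real n * p) ^ k) + real (n choose t) * (1 - p) ^ (t choose 2) < 1"
  obtains E where "E \<subseteq> pairs {..<n}"
    "2 * card {vs \<in> short_cycles n g. cycle_edges vs \<subseteq> E} < n"
    "\<forall>T\<subseteq>{..<n}. card T = t \<longrightarrow> pairs T \<inter> E \<noteq> {}"
proof -
  let ?P = "pairs {..<n}"
  let ?X = "\<lambda>E. real (card {vs \<in> short_cycles n g. cycle_edges vs \<subseteq> E})"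
  let ?many = "\<lambda>E. real n / 2 \<le> ?X E"
  let ?indep = "\<lambda>E. \<exists>T\<in>{T. T \<subseteq> {..<n} \<and> card T = t}. pairs T \<inter> E = {}"
  have "bern_prob p ?P ?many \<le> bern_expect p ?P ?X / (real n / 2)"
    using assms(1-3) by (intro bern_prob_Markov) auto
  also have "\<dots> = 2 / real n * (\<Sum>vs\<in>short_cycles n g. p ^ length vs)"
    unfolding bern_expect_card_short_cycles by simp
  also have "\<dots> \<le> 2 / real n * (\<Sum>k<g. (real n * p) ^ k)"
    using sum_short_cycles_le[OF assms(1), of n g] by (intro mult_left_mono) auto
  finally have "bern_prob p ?P ?many \<le> 2 / real n * (\<Sum>k<g. (real n * p) ^ k)" .
  then have "bern_prob p ?P (\<lambda>E. ?many E \<or> ?indep E) < 1"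
    using bern_prob_disj[OF assms(1,2), of ?P ?many ?indep]
      bern_prob_independent_set[OF assms(1,2), of n t] assms(4) by linarith
  then obtain E where "E \<subseteq> ?P" "\<not> (?many E \<or> ?indep E)"
    by (rule bern_prob_less_one_obtain[OF finite_pairs[OF finite_lessThan] assms(1,2)])
  then show ?thesis
    by (intro that) auto
qed

lemma sum_power_le_power:
  fixes x :: real
  assumes "2 \<le> x"
  shows "(\<Sum>k<g. x ^ k) \<le> x ^ g"
proof (induction g)
  case (Suc g)
  have "x ^ g \<le> x ^ g * (x - 1)"
    using assms by (simp add: mult_le_cancel_left1)
  with Suc show ?case by (simp add: algebra_simps)
qed simp

lemma one_minus_inverse_power_le_half:
  assumes "1 \<le> M"
  shows "(1 - 1 / real M) ^ M \<le> 1 / 2"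
proof -
  have "(1 - 1 / real M) ^ M \<le> exp (- (1 / real M)) ^ M"
    using assms exp_ge_add_one_self[of "- (1 / real M)"] by (intro power_mono) auto
  also have "\<dots> = exp (- 1)"
    using assms by (simp add: exp_of_nat_mult[symmetric])
  also have "\<dots> \<le> 1 / 2"
    using exp_ge_add_one_self[of 1] by (simp add: exp_minus field_simps)
  finally show ?thesis .
qed

lemma erdos_short_cycle_bound:
  fixes M :: nat
  assumes "M = 256 ^ g"
  shows "2 / real (256 * M) * (\<Sum>k<g. (real (256 * M) * (1 / M)) ^ k) \<le> 1 / 128"
proof -
  have "(\<Sum>k<g. (real (256 * M) * (1 / M)) ^ k) = (\<Sum>k<g. 256 ^ k)"
    using assms by simp
  also have "\<dots> \<le> real M"
    using sum_power_le_power[of 256 g] assms by simp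
  finally show ?thesis
    using assms by (simp add: field_simps)
qed

lemma erdos_independence_bound:
  fixes M :: nat
  assumes "1 \<le> M"
  shows "real ((256 * M) choose (32 * M)) * (1 - 1 / M) ^ ((32 * M) choose 2) \<le> 1 / 2"
proof -
  have "M * (256 * M + 1) \<le> M * (16 * (32 * M - 1))"
    using assms by (intro mult_le_mono2) simp
  also have "\<dots> = (32 * M) choose 2"
    by (simp add: choose_two)
  finally have "(1 - 1 / real M) ^ ((32 * M) choose 2) \<le> (1 - 1 / real M) ^ (M * (256 * M + 1))"
    using assms by (intro power_decreasing) auto
  also have "\<dots> = ((1 - 1 / real M) ^ M) ^ (256 * M + 1)"
    by (rule power_mult)
  also have "\<dots> \<le> (1 / 2) ^ (256 * M + 1)"
    using assms one_minus_inverse_power_le_half[OF assms] by (intro power_mono) auto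
  finally have *: "(1 - 1 / real M) ^ ((32 * M) choose 2) \<le> (1 / 2) ^ (256 * M + 1)" .
  have "real ((256 * M) choose (32 * M)) \<le> 2 ^ (256 * M)"
    using binomial_le_pow2[of "256 * M" "32 * M"] by (metis of_nat_le_iff of_nat_numeral of_nat_power)
  then have "real ((256 * M) choose (32 * M)) * (1 - 1 / M) ^ ((32 * M) choose 2)
      \<le> 2 ^ (256 * M) * (1 / 2) ^ (256 * M + 1)"
    using * assms by (intro mult_mono) auto
  also have "\<dots> = (2 * (1 / 2)) ^ (256 * M) * (1 / 2)"
    by (simp only: power_mult_distrib power_add power_one_right mult.assoc)
  finally show ?thesis
    by simp
qed

definition induced_adj :: "'a set \<Rightarrow> 'a set set \<Rightarrow> 'a \<Rightarrow> 'a \<Rightarrow> bool" where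
  "induced_adj H E u v \<longleftrightarrow> u \<in> H \<and> v \<in> H \<and> {u, v} \<in> E"

lemma simple_graph_induced_adj:
  assumes "finite H" "E \<subseteq> pairs A"
  shows "simple_graph H (induced_adj H E)"
proof -
  have "{v} \<notin> E" for v
    using assms(2) unfolding pairs_def by auto
  then show ?thesis
    using assms(1) unfolding simple_graph_def induced_adj_def by (auto simp: insert_commute)
qed

lemma cycle_edges_subset_if_cycle:
  assumes "\<forall>i<length vs. induced_adj H E (vs ! i) (vs ! ((i + 1) mod length vs))"
  shows "cycle_edges vs \<subseteq> E"
  using assms unfolding cycle_edges_def induced_adj_def by auto

lemma pairs_disjoint_if_independent_set:
  assumes "independent_set (induced_adj H E) I" "I \<subseteq> H"
  shows "pairs I \<inter> E = {}"
proof -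
  have "{u, v} \<notin> E" if "u \<in> I" "v \<in> I" "u \<noteq> v" for u v
    using assms that unfolding independent_set_def induced_adj_def by blast
  then show ?thesis
    unfolding pairs_def by (auto simp: card_2_iff)
qed

lemma delete_short_cycles:
  assumes E: "E \<subseteq> pairs {..<n}"
    and few: "2 * card {vs \<in> short_cycles n g. cycle_edges vs \<subseteq> E} < n"
    and dense: "\<forall>T\<subseteq>{..<n}. card T = t \<longrightarrow> pairs T \<inter> E \<noteq> {}"
  defines "H \<equiv> {..<n} - hd ` {vs \<in> short_cycles n g. cycle_edges vs \<subseteq> E}"
  shows "simple_graph H (induced_adj H E)" "\<forall>k<g. \<not> has_cycle_of_length H (induced_adj H E) k"
    "n < 2 * card H" "\<And>I. I \<subseteq> H \<Longrightarrow> independent_set (induced_adj H E) I \<Longrightarrow> card I < t"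
proof -
  let ?B = "{vs \<in> short_cycles n g. cycle_edges vs \<subseteq> E}"
  have "finite ?B"
    using finite_short_cycles by simp
  show "simple_graph H (induced_adj H E)"
    using E by (intro simple_graph_induced_adj) (auto simp: H_def)
  show "\<forall>k<g. \<not> has_cycle_of_length H (induced_adj H E) k"
  proof (intro allI impI notI)
    fix k assume "k < g" "has_cycle_of_length H (induced_adj H E) k"
    then obtain vs where vs: "3 \<le> length vs" "length vs < g" "distinct vs" "set vs \<subseteq> H"
      and adj: "\<forall>i<length vs. induced_adj H E (vs ! i) (vs ! ((i + 1) mod length vs))"
      unfolding has_cycle_of_length_def by auto
    then have "vs \<in> ?B"
      using cycle_edges_subset_if_cycle[OF adj] unfolding short_cycles_def H_def by auto
    moreover have "hd vs \<in> set vs"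
      using vs(1) by (cases vs) auto
    ultimately show False
      using vs(4) unfolding H_def by blast
  qed
  have "n - card (hd ` ?B) \<le> card H"
    unfolding H_def using diff_card_le_card_Diff[of "hd ` ?B" "{..<n}"] \<open>finite ?B\<close> by simp
  moreover have "card (hd ` ?B) \<le> card ?B"
    using \<open>finite ?B\<close> by (rule card_image_le)
  ultimately show "n < 2 * card H"
    using few by linarith
  show "card I < t" if I: "I \<subseteq> H" "independent_set (induced_adj H E) I" for I
  proof (rule ccontr)
    assume "\<not> card I < t"
    then obtain T where T: "T \<subseteq> I" "card T = t"
      by (metis not_less obtain_subset_with_card_n)
    have "pairs T \<inter> E = {}"
      using pairs_disjoint_if_independent_set[OF I(2,1)] T(1) unfolding pairs_def by blast
    moreover have "T \<subseteq> {..<n}"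
      using T I unfolding H_def by auto
    ultimately show False
      using dense T(2) by blast
  qed
qed

lemma exists_graph_without_short_cycles_and_large_independent_sets:
  fixes g :: nat
  obtains H :: "nat set" and Adj where "simple_graph H Adj" "\<forall>k<g. \<not> has_cycle_of_length H Adj k"
    "\<forall>I\<subseteq>H. independent_set Adj I \<longrightarrow> 4 * card I < card H"
proof -
  define M :: nat where "M = 256 ^ g"
  have M: "1 \<le> M" by (simp add: M_def)
  have bound: "2 / real (256 * M) * (\<Sum>k<g. (real (256 * M) * (1 / M)) ^ k)
      + real ((256 * M) choose (32 * M)) * (1 - 1 / M) ^ ((32 * M) choose 2) < 1"
    using erdos_short_cycle_bound[OF M_def] erdos_independence_bound[OF M] by linarith
  have p: "0 \<le> 1 / real M" "1 / real M \<le> 1" "0 < 256 * M"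
    using M by auto
  obtain E where E: "E \<subseteq> pairs {..<256 * M}"
    "2 * card {vs \<in> short_cycles (256 * M) g. cycle_edges vs \<subseteq> E} < 256 * M"
    "\<forall>T\<subseteq>{..<256 * M}. card T = 32 * M \<longrightarrow> pairs T \<inter> E \<noteq> {}"
    by (rule exists_edge_set_few_short_cycles_no_independent_set[OF p bound])
  define H where "H = {..<256 * M} - hd ` {vs \<in> short_cycles (256 * M) g. cycle_edges vs \<subseteq> E}"
  note H = delete_short_cycles[OF E, folded H_def]
  have "4 * card I < card H" if "I \<subseteq> H" "independent_set (induced_adj H E) I" for I
    using H(3) H(4)[OF that] by linarith
  then have "\<forall>I\<subseteq>H. independent_set (induced_adj H E) I \<longrightarrow> 4 * card I < card H"
    by blast
  with H(1,2) show ?thesis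
    by (rule that)
qed

section \<open>Adding a disjoint cycle\<close>

definition ring_succ :: "nat \<Rightarrow> nat \<Rightarrow> nat \<Rightarrow> nat" where
  "ring_succ a g v = (if v + 1 = a + g then a else v + 1)"

definition ring_adj :: "nat \<Rightarrow> nat \<Rightarrow> nat \<Rightarrow> nat \<Rightarrow> bool" where
  "ring_adj a g u v \<longleftrightarrow> u \<in> {a..<a + g} \<and> v \<in> {a..<a + g} \<and> (v = ring_succ a g u \<or> u = ring_succ a g v)"

lemma ring_succ_inj:
  "u \<in> {a..<a + g} \<Longrightarrow> v \<in> {a..<a + g} \<Longrightarrow> ring_succ a g u = ring_succ a g v \<Longrightarrow> u = v"
  by (auto simp: ring_succ_def split: if_splits)

lemma simple_graph_ring: "3 \<le> g \<Longrightarrow> simple_graph {a..<a + g} (ring_adj a g)"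
  unfolding simple_graph_def ring_adj_def ring_succ_def by auto

lemma has_cycle_ring: "3 \<le> g \<Longrightarrow> has_cycle_of_length {a..<a + g} (ring_adj a g) g"
  unfolding has_cycle_of_length_def
proof (intro conjI exI[of _ "[a..<a + g]"] allI impI)
  fix i assume "3 \<le> g" "i < g"
  then show "ring_adj a g ([a..<a + g] ! i) ([a..<a + g] ! ((i + 1) mod g))"
    by (cases "i + 1 = g") (auto simp: ring_adj_def ring_succ_def)
qed auto

lemma ring_subset_if_succ_closed:
  assumes "v \<in> S" "v \<in> {a..<a + g}" "\<And>u. u \<in> S \<Longrightarrow> ring_succ a g u \<in> S"
  shows "{a..<a + g} \<subseteq> S"
proof -
  have up: "u \<in> S" if "w \<in> S" "w \<le> u" "u < a + g" for w u
    using that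
  proof (induction u)
    case (Suc u)
    show ?case
    proof (cases "w = Suc u")
      case False
      with Suc have "ring_succ a g u \<in> S" by (intro assms(3)) simp
      with Suc.prems(3) show ?thesis by (simp add: ring_succ_def)
    qed (use Suc.prems in simp)
  qed simp
  have "v \<le> a + g - 1" "a + g - 1 < a + g"
    using assms(2) by auto
  then have "a + g - 1 \<in> S"
    using up[OF assms(1)] by blast
  then have "a \<in> S"
    using assms(2) assms(3)[of "a + g - 1"] by (simp add: ring_succ_def)
  then show ?thesis
    using up by auto
qed

lemma ring_no_short_cycle:
  assumes "k < g"
  shows "\<not> has_cycle_of_length {a..<a + g} (ring_adj a g) k"
proof
  assume "has_cycle_of_length {a..<a + g} (ring_adj a g) k"
  then obtain vs where vs: "3 \<le> k" "length vs = k" "distinct vs" "set vs \<subseteq> {a..<a + g}"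
    and adj: "\<forall>i<k. ring_adj a g (vs ! i) (vs ! ((i + 1) mod k))"
    unfolding has_cycle_of_length_def by auto
  have "ring_succ a g x \<in> set vs" if x: "x \<in> set vs" for x
  proof -
    obtain j where j: "j < k" "vs ! j = x"
      using x unfolding in_set_conv_nth vs(2) by blast
    define i where "i = (if j = 0 then k - 1 else j - 1)"
    have i: "i < k" "(i + 1) mod k = j"
      using j vs(1) by (auto simp: i_def)
    define y where "y = vs ! i"
    define z where "z = vs ! ((j + 1) mod k)"
    have "(j + 1) mod k = (i + 2) mod k"
      by (metis i(2) mod_add_left_eq add.assoc one_add_one)
    then have "(j + 1) mod k < k" "(j + 1) mod k \<noteq> i"
      using vs(1) Suc_Suc_mod_neq[OF vs(1) i(1)] by simp_all
    then have "y \<noteq> z" "z \<in> set vs"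
      using vs(2,3) i(1) by (simp_all add: y_def z_def nth_eq_iff_index_eq)
    moreover have "y \<in> set vs"
      using i(1) vs(2) by (simp add: y_def)
    moreover have "ring_adj a g y x" "ring_adj a g x z"
      using adj[rule_format, OF i(1)] adj[rule_format, OF j(1)] i(2) j(2) by (simp_all add: y_def z_def)
    ultimately show ?thesis
      unfolding ring_adj_def using ring_succ_inj[of y a g z] by metis
  qed
  moreover have "vs ! 0 \<in> set vs"
    using vs(1,2) by simp
  ultimately have "{a..<a + g} \<subseteq> set vs"
    using ring_subset_if_succ_closed[of "vs ! 0" "set vs"] vs(4) by blast
  then have "g \<le> k"
    using card_mono[OF finite_set, of "{a..<a + g}" vs] distinct_card[OF vs(3)] vs(2) by simp
  with assms show False by simp
qed

lemma cycle_set_subset_if_closed: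
  assumes "\<forall>i<k. R (vs ! i) (vs ! ((i + 1) mod k))" "\<And>u v. R u v \<Longrightarrow> u \<in> V \<Longrightarrow> v \<in> V"
    "vs ! 0 \<in> V" "length vs = k"
  shows "set vs \<subseteq> V"
proof -
  have "i < k \<longrightarrow> vs ! i \<in> V" for i
  proof (induction i)
    case (Suc i)
    show ?case
    proof
      assume "Suc i < k"
      then have "R (vs ! i) (vs ! Suc i)"
        using assms(1) by (metis Suc_eq_plus1 Suc_lessD mod_less)
      with Suc \<open>Suc i < k\<close> show "vs ! Suc i \<in> V"
        using assms(2) by simp
    qed
  qed (use assms(3) in simp)
  then show ?thesis
    using assms(4) by (auto simp: in_set_conv_nth)
qed

lemma has_cycle_of_length_component:
  assumes "3 \<le> k" "length vs = k" "distinct vs" "vs ! 0 \<in> V"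
    and adj: "\<forall>i<k. E (vs ! i) (vs ! ((i + 1) mod k)) \<or> F (vs ! i) (vs ! ((i + 1) mod k))"
    and E: "\<And>u v. E u v \<Longrightarrow> u \<in> V \<and> v \<in> V" and F: "\<And>u v. F u v \<Longrightarrow> u \<notin> V"
  shows "has_cycle_of_length V E k"
proof -
  have "\<And>u v. E u v \<or> F u v \<Longrightarrow> u \<in> V \<Longrightarrow> v \<in> V"
    using E F by blast
  from cycle_set_subset_if_closed[OF adj this assms(4,2)]
  have V: "set vs \<subseteq> V" .
  have "E (vs ! i) (vs ! ((i + 1) mod k))" if "i < k" for i
  proof -
    have "vs ! i \<in> V"
      using V that assms(2) nth_mem by blast
    then show ?thesis
      using adj that F by blast
  qed
  then show ?thesis
    using assms(1-3) V unfolding has_cycle_of_length_def by blast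
qed

lemma has_cycle_of_length_disjoint_union:
  assumes cyc: "has_cycle_of_length (V \<union> W) (\<lambda>u v. E u v \<or> F u v) k" and "V \<inter> W = {}"
    and E: "\<And>u v. E u v \<Longrightarrow> u \<in> V \<and> v \<in> V" and F: "\<And>u v. F u v \<Longrightarrow> u \<in> W \<and> v \<in> W"
  shows "has_cycle_of_length V E k \<or> has_cycle_of_length W F k"
proof -
  obtain vs where vs: "3 \<le> k" "length vs = k" "distinct vs" "set vs \<subseteq> V \<union> W"
    and adj: "\<forall>i<k. E (vs ! i) (vs ! ((i + 1) mod k)) \<or> F (vs ! i) (vs ! ((i + 1) mod k))"
    using cyc unfolding has_cycle_of_length_def by auto
  have "vs ! 0 \<in> set vs"
    using vs(1,2) by simp
  then consider "vs ! 0 \<in> V" | "vs ! 0 \<in> W"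
    using vs(4) by blast
  then show ?thesis
  proof cases
    case 1
    have "\<And>u v. F u v \<Longrightarrow> u \<notin> V"
      using F \<open>V \<inter> W = {}\<close> by blast
    then show ?thesis
      using has_cycle_of_length_component[OF vs(1-3) 1 adj E] by blast
  next
    case 2
    have "\<And>u v. E u v \<Longrightarrow> u \<notin> W"
      using E \<open>V \<inter> W = {}\<close> by blast
    moreover have "\<forall>i<k. F (vs ! i) (vs ! ((i + 1) mod k)) \<or> E (vs ! i) (vs ! ((i + 1) mod k))"
      using adj by blast
    ultimately show ?thesis
      using has_cycle_of_length_component[OF vs(1-3) 2 _ F] by blast
  qed
qed

lemma has_cycle_of_length_mono:
  assumes "has_cycle_of_length V E k" "V \<subseteq> W" "\<And>u v. E u v \<Longrightarrow> F u v"
  shows "has_cycle_of_length W F k"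
proof -
  obtain vs where "3 \<le> k" "length vs = k" "distinct vs" "set vs \<subseteq> V"
    "\<forall>i<k. E (vs ! i) (vs ! ((i + 1) mod k))"
    using assms(1) unfolding has_cycle_of_length_def by auto
  then show ?thesis
    using assms(2,3) unfolding has_cycle_of_length_def by blast
qed

lemma disjoint_union_ring:
  assumes G: "simple_graph V E" and "V \<subseteq> {..<a}" "3 \<le> g"
    and short: "\<forall>k<g. \<not> has_cycle_of_length V E k"
  shows "simple_graph (V \<union> {a..<a + g}) (\<lambda>u v. E u v \<or> ring_adj a g u v)"
    and "has_girth (V \<union> {a..<a + g}) (\<lambda>u v. E u v \<or> ring_adj a g u v) g"
proof -
  have disj: "V \<inter> {a..<a + g} = {}"
    using assms(2) by auto
  have E: "\<And>u v. E u v \<Longrightarrow> u \<in> V \<and> v \<in> V"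
    using G unfolding simple_graph_def by blast
  have R: "\<And>u v. ring_adj a g u v \<Longrightarrow> u \<in> {a..<a + g} \<and> v \<in> {a..<a + g}"
    unfolding ring_adj_def by blast
  show "simple_graph (V \<union> {a..<a + g}) (\<lambda>u v. E u v \<or> ring_adj a g u v)"
    using G simple_graph_ring[OF \<open>3 \<le> g\<close>, of a] unfolding simple_graph_def by blast
  have "has_cycle_of_length (V \<union> {a..<a + g}) (\<lambda>u v. E u v \<or> ring_adj a g u v) g"
    by (rule has_cycle_of_length_mono[OF has_cycle_ring[OF \<open>3 \<le> g\<close>]]) auto
  moreover have "\<not> has_cycle_of_length (V \<union> {a..<a + g}) (\<lambda>u v. E u v \<or> ring_adj a g u v) k"
    if "k < g" for k
    using has_cycle_of_length_disjoint_union[OF _ disj E R] short ring_no_short_cycle that by blast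
  ultimately show "has_girth (V \<union> {a..<a + g}) (\<lambda>u v. E u v \<or> ring_adj a g u v) g"
    unfolding has_girth_def by blast
qed

theorem mainTheorem13:
  fixes g :: nat
  assumes "g \<ge> 3"
  shows "\<exists>(V :: nat set) E. simple_graph V E \<and> has_girth V E g \<and> \<not> CBU V E"
proof -
  obtain H :: "nat set" and Adj where H: "simple_graph H Adj" and short: "\<forall>k<g. \<not> has_cycle_of_length H Adj k"
    and sparse: "\<forall>I\<subseteq>H. independent_set Adj I \<longrightarrow> 4 * card I < card H"
    by (rule exists_graph_without_short_cycles_and_large_independent_sets)
  have "finite H"
    using H unfolding simple_graph_def by simp
  then obtain a where a: "H \<subseteq> {..<a}"
    unfolding finite_nat_set_iff_bounded by (auto simp: subset_iff)
  define E where "E u v \<longleftrightarrow> Adj u v \<or> ring_adj a g u v" for u v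
  have "\<not> CBU (H \<union> {a..<a + g}) E"
  proof
    assume "CBU (H \<union> {a..<a + g}) E"
    then have "CBU H Adj"
      by (rule CBU_induced_subgraph) (use a in \<open>auto simp: E_def ring_adj_def\<close>)
    then obtain I where "I \<subseteq> H" "independent_set Adj I" "card H \<le> 4 * card I"
      using \<open>finite H\<close> by (rule CBU_large_independent_set)
    with sparse show False
      by (meson not_le)
  qed
  then show ?thesis
    using disjoint_union_ring[OF H a assms short] unfolding E_def[abs_def] by blast
qed

end
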